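(* The identity map $\mathrm{id}_2:M_2\to M_2$ generates an exposed ray of the convex cone $\mathbb P_1[M_2,M_2]$ of all positive linear maps from $M_2$ into $M_2$.
   Context: $M_2$ denotes the algebra of $2\times 2$ complex matrices. A linear map $M_2\to M_2$ is positive if it sends positive semidefinite matrices to positive semidefinite matrices; $\mathbb P_1[M_2,M_2]$ is the convex cone of such maps, regarded in the real vector space of Hermiticity-preserving linear maps $M_2\to M_2$. A nonzero $\phi$ in the cone generates an exposed ray if there is a real linear functional $f$ on that space with $f\ge0$ on the cone and $\{\psi\in\mathbb P_1[M_2,M_2]: f(\psi)=0\}=\{\lambda\phi:\lambda\ge0\}$. *)

theory Defs
  imports "HOL-Analysis.Analysis"
begin

type_synonym M2 = "complex^2^2"

definition cscale :: "complex \<Rightarrow> M2 \<Rightarrow> M2" where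
  "cscale c A = (\<chi> i j. c * A$i$j)"

definition adjoint2 :: "M2 \<Rightarrow> M2" where
  "adjoint2 A = (\<chi> i j. cnj (A$j$i))"

definition hermitian2 :: "M2 \<Rightarrow> bool" where
  "hermitian2 A \<longleftrightarrow> adjoint2 A = A"

definition psd2 :: "M2 \<Rightarrow> bool" where
  "psd2 A \<longleftrightarrow> hermitian2 A \<and>
     (\<forall>x::complex^2. 0 \<le> Re (\<Sum>i\<in>UNIV. \<Sum>j\<in>UNIV. cnj (x$i) * A$i$j * x$j))"

definition clinear2 :: "(M2 \<Rightarrow> M2) \<Rightarrow> bool" where
  "clinear2 \<phi> \<longleftrightarrow> (\<forall>A B. \<phi> (A + B) = \<phi> A + \<phi> B) \<and> (\<forall>c A. \<phi> (cscale c A) = cscale c (\<phi> A))"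

definition HP :: "(M2 \<Rightarrow> M2) set" where
  "HP = {\<phi>. clinear2 \<phi> \<and> (\<forall>A. hermitian2 A \<longrightarrow> hermitian2 (\<phi> A))}"

definition P1 :: "(M2 \<Rightarrow> M2) set" where
  "P1 = {\<phi>\<in>HP. \<forall>A. psd2 A \<longrightarrow> psd2 (\<phi> A)}"

definition real_functional_on_HP :: "((M2 \<Rightarrow> M2) \<Rightarrow> real) \<Rightarrow> bool" where
  "real_functional_on_HP f \<longleftrightarrow>
     (\<forall>\<phi>\<in>HP. \<forall>\<psi>\<in>HP. \<forall>a b::real.
        f (\<lambda>A. a *\<^sub>R \<phi> A + b *\<^sub>R \<psi> A) = a * f \<phi> + b * f \<psi>)"

definition exposed_ray_P1 :: "(M2 \<Rightarrow> M2) \<Rightarrow> bool" where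
  "exposed_ray_P1 \<phi> \<longleftrightarrow> \<phi> \<in> P1 \<and> \<phi> \<noteq> (\<lambda>A. 0) \<and>
     (\<exists>f. real_functional_on_HP f \<and> (\<forall>\<psi>\<in>P1. 0 \<le> f \<psi>) \<and>
          {\<psi>\<in>P1. f \<psi> = 0} = {(\<lambda>A. l *\<^sub>R \<phi> A) | l::real. 0 \<le> l})"

end

theory Submission
  imports Defs
begin

text \<open>If \<open>\<psi>\<close> is positive and \<open>y \<bottom> x\<close>, then \<open>\<langle>y, \<psi>(x x\<^sup>*) y\<rangle> \<ge> 0\<close>, with equality for
  \<open>\<psi> = id\<close>. Summing these numbers over the six vectors \<open>e\<^sub>1\<close>, \<open>e\<^sub>2\<close>, \<open>e\<^sub>1 \<plusminus> e\<^sub>2\<close>,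
  \<open>e\<^sub>1 \<plusminus> i e\<^sub>2\<close> gives a real linear functional that is nonnegative on the cone and vanishes
  on the ray of the identity. Conversely, if it vanishes at a positive \<open>\<psi>\<close>, each term vanishes,
  so the positive semidefinite matrix \<open>\<psi>(x x\<^sup>*)\<close> annihilates \<open>x\<^sup>\<bottom>\<close>. Together with hermiticity
  these are enough linear conditions on the images of the matrix units to force \<open>\<psi> = l \<cdot> id\<close>,
  and \<open>l \<ge> 0\<close> by positivity.\<close>

definition sesq_form :: "complex^'n^'n \<Rightarrow> complex^'n \<Rightarrow> complex^'n \<Rightarrow> complex" where
  "sesq_form A x y = (\<Sum>i\<in>UNIV. cnj (x$i) * (A *v y)$i)"

lemma sesq_form_add_left: "sesq_form A (x + y) z = sesq_form A x z + sesq_form A y z"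
  by (simp add: sesq_form_def sum.distrib algebra_simps)

lemma sesq_form_add_right: "sesq_form A x (y + z) = sesq_form A x y + sesq_form A x z"
  by (simp add: sesq_form_def matrix_vector_mult_def sum.distrib sum_distrib_left algebra_simps)

lemma sesq_form_smult_left: "sesq_form A (c *s x) y = cnj c * sesq_form A x y"
  by (simp add: sesq_form_def sum_distrib_left algebra_simps)

lemma sesq_form_smult_right: "sesq_form A x (c *s y) = c * sesq_form A x y"
  by (simp add: sesq_form_def matrix_vector_mult_def sum_distrib_left algebra_simps)

lemma sesq_form_scaleR_matrix: "sesq_form (a *\<^sub>R A) x y = of_real a * sesq_form A x y"
  by (simp add: sesq_form_def matrix_vector_mult_def)
    (simp add: scaleR_conv_of_real sum_distrib_left algebra_simps)

lemma sesq_form_add_matrix: "sesq_form (A + B) x y = sesq_form A x y + sesq_form B x y"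
  by (simp add: sesq_form_def matrix_vector_mult_def sum.distrib algebra_simps)

lemma sesq_form_expand: "sesq_form A x y = (\<Sum>i\<in>UNIV. \<Sum>j\<in>UNIV. cnj (x$i) * A$i$j * y$j)"
  by (simp add: sesq_form_def matrix_vector_mult_def sum_distrib_left mult.assoc)

lemma sesq_form_cnj_swap:
  assumes "\<And>i j. cnj (A$j$i) = A$i$j"
  shows "sesq_form A x y = cnj (sesq_form A y x)"
  unfolding sesq_form_expand by (simp add: assms) (subst sum.swap, simp add: algebra_simps)

lemma Re_sesq_form_image_self: "Re (sesq_form A (A *v y) y) = (A *v y) \<bullet> (A *v y)"
  by (simp add: sesq_form_def inner_vec_def inner_complex_def power2_eq_square)

lemma nonneg_quadratic_imp_linear_coeff_zero:
  fixes b c :: real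
  assumes "\<And>t. 0 \<le> t * b + t\<^sup>2 * c"
  shows "b = 0"
proof (rule ccontr)
  assume "b \<noteq> 0"
  have "0 \<le> c" using assms[of 1] assms[of "-1"] by simp
  define t where "t = - b / (c + 1)"
  have t: "t * (c + 1) = - b" using \<open>0 \<le> c\<close> by (simp add: t_def)
  then have "t \<noteq> 0" using \<open>b \<noteq> 0\<close> by auto
  have "t * b + t\<^sup>2 * c = t * (b + t * (c + 1)) - t\<^sup>2"
    by (simp add: algebra_simps power2_eq_square)
  also have "\<dots> = - t\<^sup>2" using t by simp
  finally show False using assms[of t] \<open>t \<noteq> 0\<close> by simp
qed

lemma psd_form_zero_imp_kernel:
  assumes herm: "\<And>i j. cnj (A$j$i) = A$i$j"
    and nonneg: "\<And>x. 0 \<le> Re (sesq_form A x x)"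
    and zero: "Re (sesq_form A y y) = 0"
  shows "A *v y = 0"
proof -
  txt \<open>Positivity along the real line \<open>y + t z\<close> kills the linear term; then take \<open>z = A y\<close>.\<close>
  have "2 * Re (sesq_form A z y) = 0" for z
  proof (rule nonneg_quadratic_imp_linear_coeff_zero)
    fix t :: real
    have "Re (sesq_form A (y + of_real t *s z) (y + of_real t *s z))
        = t * (2 * Re (sesq_form A z y)) + t\<^sup>2 * Re (sesq_form A z z)"
      using sesq_form_cnj_swap[OF herm, of y z] zero
      by (simp add: sesq_form_add_left sesq_form_add_right sesq_form_smult_left
          sesq_form_smult_right power2_eq_square algebra_simps)
    then show "0 \<le> t * (2 * Re (sesq_form A z y)) + t\<^sup>2 * Re (sesq_form A z z)"
      using nonneg by metis
  qed
  from this[of "A *v y"] show ?thesis by (simp add: Re_sesq_form_image_self)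
qed

lemma hermitian2_iff: "hermitian2 A \<longleftrightarrow> (\<forall>i j. cnj (A$j$i) = A$i$j)"
  by (simp add: hermitian2_def adjoint2_def vec_eq_iff)

lemma psd2_iff: "psd2 A \<longleftrightarrow> hermitian2 A \<and> (\<forall>x. 0 \<le> Re (sesq_form A x x))"
  by (simp add: psd2_def sesq_form_expand)

lemma psd2_kernel:
  assumes "psd2 A" "Re (sesq_form A y y) = 0"
  shows "A *v y = 0"
  using assms psd_form_zero_imp_kernel by (metis hermitian2_iff psd2_iff)

definition outer :: "complex^2 \<Rightarrow> M2" where
  "outer x = (\<chi> i j. x$i * cnj (x$j))"

definition perp :: "complex^2 \<Rightarrow> complex^2" where
  "perp x = vector [- cnj (x$2), cnj (x$1)]"

lemma sesq_form_outer:
  "sesq_form (outer x) y y = (\<Sum>i\<in>UNIV. cnj (y$i) * x$i) * cnj (\<Sum>i\<in>UNIV. cnj (y$i) * x$i)"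
  by (simp add: sesq_form_def outer_def matrix_vector_mult_def sum_distrib_left sum_distrib_right
      algebra_simps)
    (rule sum.swap)

lemma psd2_outer: "psd2 (outer x)"
  unfolding psd2_iff hermitian2_iff sesq_form_outer complex_mult_cnj by (simp add: outer_def)

lemma sesq_form_outer_perp: "sesq_form (outer x) (perp x) (perp x) = 0"
  by (simp add: sesq_form_outer perp_def sum_2)

definition matrix_unit :: "2 \<Rightarrow> 2 \<Rightarrow> M2" where
  "matrix_unit a b = (\<chi> i j. if i = a \<and> j = b then 1 else 0)"

lemma matrix_unit_expansion: "A = (\<Sum>a\<in>UNIV. \<Sum>b\<in>UNIV. cscale (A$a$b) (matrix_unit a b))"
  by (simp add: matrix_unit_def cscale_def vec_eq_iff forall_2 sum_2)

lemma clinear2_expansion: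
  assumes "clinear2 \<psi>"
  shows "\<psi> A = (\<Sum>a\<in>UNIV. \<Sum>b\<in>UNIV. cscale (A$a$b) (\<psi> (matrix_unit a b)))"
  using assms unfolding clinear2_def by (subst matrix_unit_expansion) (simp add: sum_2)

definition test_vectors :: "(complex^2) list" where
  "test_vectors = [vector [1, 0], vector [0, 1], vector [1, 1], vector [1, -1],
     vector [1, \<i>], vector [1, -\<i>]]"

lemma mult_perp_eq_0_iff:
  fixes M :: M2
  shows "M *v perp x = 0 \<longleftrightarrow>
     cnj (x$1) * M$1$2 = cnj (x$2) * M$1$1 \<and> cnj (x$1) * M$2$2 = cnj (x$2) * M$2$1"
  by (auto simp: perp_def matrix_vector_mult_def sum_2 vec_eq_iff forall_2 algebra_simps)

lemma clinear2_eq_scaleR_if_test_kernels: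
  assumes lin: "clinear2 \<psi>"
    and herm: "\<And>x. x \<in> set test_vectors \<Longrightarrow> hermitian2 (\<psi> (outer x))"
    and ker: "\<And>x. x \<in> set test_vectors \<Longrightarrow> \<psi> (outer x) *v perp x = 0"
  obtains l :: real where "\<And>A. \<psi> A = l *\<^sub>R A"
proof -
  define B where "B a b = \<psi> (matrix_unit a b)" for a b
  have entry: "\<psi> (outer x) $ i $ j = (\<Sum>a\<in>UNIV. \<Sum>b\<in>UNIV. x$a * cnj (x$b) * B a b $ i $ j)"
    for x i j
    using clinear2_expansion[OF lin, of "outer x"]
    by (simp add: B_def outer_def cscale_def sum_component)
  have conds: "cnj (x$1) * \<psi> (outer x) $1$2 = cnj (x$2) * \<psi> (outer x) $1$1"
    "cnj (x$1) * \<psi> (outer x) $2$2 = cnj (x$2) * \<psi> (outer x) $2$1"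
    "cnj (\<psi> (outer x) $1$2) = \<psi> (outer x) $2$1" "cnj (\<psi> (outer x) $1$1) = \<psi> (outer x) $1$1"
    if "x \<in> set test_vectors" for x
    using ker[OF that] herm[OF that] unfolding mult_perp_eq_0_iff hermitian2_iff by blast+
  note test_conds = conds[of "vector [1, 0]"] conds[of "vector [0, 1]"] conds[of "vector [1, 1]"]
    conds[of "vector [1, -1]"] conds[of "vector [1, \<i>]"] conds[of "vector [1, -\<i>]"]
  define l where "l = Re (B 1 1 $ 1 $ 1)"
  txt \<open>The vectors \<open>e\<^sub>1\<close>, \<open>e\<^sub>2\<close> make \<open>B 1 1\<close>, \<open>B 2 2\<close> diagonal multiples of the matrix units;
    (1, \<plusminus>1) and (1, \<plusminus>i) determine \<open>B 1 2 + B 2 1\<close> and \<open>B 2 1 - B 1 2\<close>; hermiticity of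
    \<open>\<psi> (outer (1, 1))\<close> equates the two diagonal scalars.\<close>
  have "B 1 1 = l *\<^sub>R matrix_unit 1 1 \<and> B 1 2 = l *\<^sub>R matrix_unit 1 2 \<and>
      B 2 1 = l *\<^sub>R matrix_unit 2 1 \<and> B 2 2 = l *\<^sub>R matrix_unit 2 2"
    using test_conds unfolding l_def
    by (simp add: test_vectors_def entry sum_2 matrix_unit_def vec_eq_iff forall_2 complex_eq_iff)
  then have B_scalar: "B a b = l *\<^sub>R matrix_unit a b" for a b
    using exhaust_2[of a] exhaust_2[of b] by blast
  have "\<psi> A = (\<Sum>a\<in>UNIV. \<Sum>b\<in>UNIV. cscale (A$a$b) (l *\<^sub>R matrix_unit a b))" for A
    unfolding clinear2_expansion[OF lin, of A] B_def[symmetric] B_scalar ..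
  also have "\<dots> A = l *\<^sub>R A" for A
    by (simp add: cscale_def matrix_unit_def vec_eq_iff forall_2 sum_2)
  finally show ?thesis by (rule that)
qed

definition exposing_functional :: "(M2 \<Rightarrow> M2) \<Rightarrow> real" where
  "exposing_functional \<psi> = (\<Sum>x\<leftarrow>test_vectors. Re (sesq_form (\<psi> (outer x)) (perp x) (perp x)))"

lemma real_functional_on_HP_exposing_functional: "real_functional_on_HP exposing_functional"
  unfolding real_functional_on_HP_def exposing_functional_def
  by (simp add: sesq_form_add_matrix sesq_form_scaleR_matrix sum_list_addf sum_list_const_mult)

lemma P1_sesq_form_outer_nonneg:
  assumes "\<psi> \<in> P1"
  shows "0 \<le> Re (sesq_form (\<psi> (outer x)) y y)"
  using assms psd2_outer unfolding P1_def psd2_iff by blast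

lemma exposing_functional_nonneg:
  assumes "\<psi> \<in> P1"
  shows "0 \<le> exposing_functional \<psi>"
  unfolding exposing_functional_def
  by (auto intro!: sum_list_nonneg simp: P1_sesq_form_outer_nonneg[OF assms])

lemma exposing_functional_scaled_id: "exposing_functional (\<lambda>A. l *\<^sub>R A) = 0"
  by (simp add: exposing_functional_def sesq_form_scaleR_matrix sesq_form_outer_perp)

lemma scaled_id_in_P1:
  assumes "0 \<le> l"
  shows "(\<lambda>A::M2. l *\<^sub>R A) \<in> P1"
proof -
  have "clinear2 (\<lambda>A::M2. l *\<^sub>R A)"
    unfolding clinear2_def cscale_def
    by (simp add: vec_eq_iff) (simp add: scaleR_conv_of_real distrib_left)
  moreover have "hermitian2 (l *\<^sub>R A)" if "hermitian2 A" for A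
    using that by (simp add: hermitian2_iff)
  moreover have "psd2 (l *\<^sub>R A)" if "psd2 A" for A
    using that assms by (simp add: psd2_iff hermitian2_iff sesq_form_scaleR_matrix)
  ultimately show ?thesis unfolding P1_def HP_def by simp
qed

lemma exposing_functional_zero_imp_scaled_id:
  assumes P: "\<psi> \<in> P1" and zero: "exposing_functional \<psi> = 0"
  obtains l :: real where "0 \<le> l" "\<psi> = (\<lambda>A. l *\<^sub>R A)"
proof -
  have lin: "clinear2 \<psi>" and psd: "\<And>A. psd2 A \<Longrightarrow> psd2 (\<psi> A)"
    using P unfolding P1_def HP_def by auto
  have "Re (sesq_form (\<psi> (outer x)) (perp x) (perp x)) = 0" if "x \<in> set test_vectors" for x
    using zero that unfolding exposing_functional_def
    by (subst (asm) sum_list_nonneg_eq_0_iff) (auto simp: P1_sesq_form_outer_nonneg[OF P])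
  then have "\<psi> (outer x) *v perp x = 0" if "x \<in> set test_vectors" for x
    using that by (intro psd2_kernel psd psd2_outer)
  moreover have "hermitian2 (\<psi> (outer x))" for x
    using psd[OF psd2_outer] unfolding psd2_iff by (rule conjunct1)
  ultimately obtain l where l: "\<And>A. \<psi> A = l *\<^sub>R A"
    using clinear2_eq_scaleR_if_test_kernels[OF lin] by blast
  have "0 \<le> Re (sesq_form (\<psi> (outer (vector [1, 0]))) (vector [1, 0]) (vector [1, 0]))"
    by (rule P1_sesq_form_outer_nonneg[OF P])
  then have "0 \<le> l"
    by (simp add: l sesq_form_scaleR_matrix sesq_form_outer sum_2)
  then show ?thesis using l that by blast
qed

lemma exposing_functional_zero_set:
  "{\<psi> \<in> P1. exposing_functional \<psi> = 0} = {(\<lambda>A. l *\<^sub>R A) |l. 0 \<le> l}"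
proof (intro set_eqI iffI)
  fix \<psi> assume "\<psi> \<in> {\<psi> \<in> P1. exposing_functional \<psi> = 0}"
  then show "\<psi> \<in> {(\<lambda>A. l *\<^sub>R A) |l. 0 \<le> l}"
    using exposing_functional_zero_imp_scaled_id by blast
next
  fix \<psi> :: "M2 \<Rightarrow> M2" assume "\<psi> \<in> {(\<lambda>A. l *\<^sub>R A) |l. 0 \<le> l}"
  then show "\<psi> \<in> {\<psi> \<in> P1. exposing_functional \<psi> = 0}"
    using scaled_id_in_P1 exposing_functional_scaled_id by blast
qed

theorem proposition3p3:
  shows "exposed_ray_P1 (\<lambda>A::M2. A)"
  unfolding exposed_ray_P1_def
proof (intro conjI exI[of _ exposing_functional])
  show "(\<lambda>A::M2. A) \<in> P1"
    using scaled_id_in_P1[of 1] by simp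
  show "(\<lambda>A::M2. A) \<noteq> (\<lambda>A. 0)"
  proof
    assume "(\<lambda>A::M2. A) = (\<lambda>A. 0)"
    then have "matrix_unit 1 1 = 0" by (rule fun_cong)
    then have "matrix_unit 1 1 $ 1 $ 1 = 0" by simp
    then show False by (simp add: matrix_unit_def)
  qed
  show "real_functional_on_HP exposing_functional"
    by (rule real_functional_on_HP_exposing_functional)
  show "\<forall>\<psi>\<in>P1. 0 \<le> exposing_functional \<psi>"
    using exposing_functional_nonneg by (rule ballI)
  show "{\<psi> \<in> P1. exposing_functional \<psi> = 0} = {(\<lambda>A. l *\<^sub>R A) |l. 0 \<le> l}"
    by (rule exposing_functional_zero_set)
qed

end
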